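(* Consider the ODE system $$\frac{du}{dt}=a_1u-b_1u^2-c_1uv,\qquad \frac{dv}{dt}=\frac{a_2v}{1+ku}-b_2v^2-c_2uv,$$ with positive parameters $a_2,b_1,b_2,c_1,c_2$, $k\ge0$, and regard $a_1>0$ as the bifurcation parameter. Let $E_3=(0,\frac{a_2}{b_2})$. If $c_1\neq\frac{b_1b_2}{ka_2+c_2}$, then the system undergoes a transcritical bifurcation around $E_3$ at $$a_1=a_1^*=\frac{c_1a_2}{b_2}.$$ *)

theory Defs
  imports "HOL-Analysis.Analysis"
begin

definition model_field ::
  "real \<Rightarrow> real \<Rightarrow> real \<Rightarrow> real \<Rightarrow> real \<Rightarrow> real \<Rightarrow> real \<Rightarrow> real^2 \<Rightarrow> real^2" where
  "model_field b1 c1 a2 b2 c2 k a1 x =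
     (\<chi> i. if i = 1
            then a1 * x$1 - b1 * (x$1)^2 - c1 * x$1 * x$2
            else a2 * x$2 / (1 + k * x$1) - b2 * (x$2)^2 - c2 * x$1 * x$2)"

definition E3 :: "real \<Rightarrow> real \<Rightarrow> real^2" where
  "E3 a2 b2 = (\<chi> i. if i = 1 then 0 else a2 / b2)"

definition is_eigenvalue :: "real^'n^'n \<Rightarrow> complex \<Rightarrow> bool" where
  "is_eigenvalue J l \<longleftrightarrow> det (mat l - (\<chi> i j. complex_of_real (J$i$j))) = 0"

definition lin_stable :: "(real \<Rightarrow> real^'n \<Rightarrow> real^'n) \<Rightarrow> real \<Rightarrow> real^'n \<Rightarrow> bool" where
  "lin_stable F mu x \<longleftrightarrow>
     (\<exists>J. (F mu has_derivative (\<lambda>h. J *v h)) (at x) \<and>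
          (\<forall>l. is_eigenvalue J l \<longrightarrow> Re l < 0))"

definition lin_unstable :: "(real \<Rightarrow> real^'n \<Rightarrow> real^'n) \<Rightarrow> real \<Rightarrow> real^'n \<Rightarrow> bool" where
  "lin_unstable F mu x \<longleftrightarrow>
     (\<exists>J. (F mu has_derivative (\<lambda>h. J *v h)) (at x) \<and>
          (\<exists>l. is_eigenvalue J l \<and> Re l > 0))"

definition transcritical_bifurcation ::
  "(real \<Rightarrow> real^'n \<Rightarrow> real^'n) \<Rightarrow> real^'n \<Rightarrow> real \<Rightarrow> bool" where
  "transcritical_bifurcation F x0 mu0 \<longleftrightarrow>
     (\<exists>\<delta>>0. \<exists>U. open U \<and> x0 \<in> U \<and>
       (\<exists>\<beta> \<gamma> :: real \<Rightarrow> real^'n. \<exists>d\<beta> d\<gamma>.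
          \<beta> mu0 = x0 \<and> \<gamma> mu0 = x0 \<and>
          continuous_on {mu0 - \<delta> <..< mu0 + \<delta>} \<beta> \<and>
          continuous_on {mu0 - \<delta> <..< mu0 + \<delta>} \<gamma> \<and>
          (\<beta> has_vector_derivative d\<beta>) (at mu0) \<and>
          (\<gamma> has_vector_derivative d\<gamma>) (at mu0) \<and> d\<beta> \<noteq> d\<gamma> \<and>
          (\<forall>mu \<in> {mu0 - \<delta> <..< mu0 + \<delta>}. \<forall>x \<in> U.
              F mu x = 0 \<longleftrightarrow> x = \<beta> mu \<or> x = \<gamma> mu) \<and>
          (\<forall>mu \<in> {mu0 - \<delta> <..< mu0 + \<delta>}. mu \<noteq> mu0 \<longrightarrow>
              \<beta> mu \<noteq> \<gamma> mu \<and> \<beta> mu \<in> U \<and> \<gamma> mu \<in> U) \<and>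
          (\<forall>mu \<in> {mu0 - \<delta> <..< mu0}.
              lin_stable F mu (\<beta> mu) \<and> lin_unstable F mu (\<gamma> mu)) \<and>
          (\<forall>mu \<in> {mu0 <..< mu0 + \<delta>}.
              lin_unstable F mu (\<beta> mu) \<and> lin_stable F mu (\<gamma> mu))))"

end

theory Submission
  imports Defs
begin

(*
  E3 is an equilibrium for every a1, and its Jacobian is triangular with eigenvalues a1 - a1_crit
  and -a2: E3 is stable for a1 < a1_crit and a saddle for a1 > a1_crit.

  Eliminating v = (a1 - b1 u) / c1 from the equations of an equilibrium with u, v nonzero leaves
  b2 a1 = H u, where H u = D u + c1 a2 / (1 + k u) and D = b1 b2 - c1 c2. As H 0 = b2 a1_crit and
  H'(0) = D - c1 a2 k = B0, the hypothesis on c1 says exactly that B0 is nonzero; then H is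
  injective near 0, so near E3 the equilibria form E3 and one further branch, on which u is a root
  of a quadratic in u, vanishing at a1_crit with slope b2 / B0. On that branch the trace of the
  Jacobian is -(b1 u + b2 v) < 0 and its determinant is u v times a difference quotient of H,
  which has the sign of B0; since u has the sign of (a1 - a1_crit) / B0, the determinant has the sign
  of a1 - a1_crit, and the two branches exchange stability.
*)

lemma is_eigenvalue_2x2_iff:
  fixes J :: "real^2^2"
  shows "is_eigenvalue J l \<longleftrightarrow> l^2 - of_real (trace J) * l + of_real (det J) = 0"
  unfolding is_eigenvalue_def det_2 trace_def sum_2
  by (simp add: mat_def algebra_simps power2_eq_square)

lemma quadratic_root_Re_neg:
  fixes z :: complex and p q :: real
  assumes root: "z^2 - of_real p * z + of_real q = 0" and "p < 0" "q > 0"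
  shows "Re z < 0"
proof -
  obtain x y where z: "z = Complex x y" by (cases z)
  have re: "x^2 - y^2 - p * x + q = 0" and im: "y * (2 * x - p) = 0"
    using root unfolding z complex_eq_iff by (auto simp: algebra_simps power2_eq_square)
  show ?thesis
  proof (cases "y = 0")
    case True
    then have "x^2 - p * x + q = 0" using re by simp
    moreover have "0 \<le> x^2" by simp
    ultimately have "p * x > 0" using \<open>q > 0\<close> by linarith
    then show ?thesis using \<open>p < 0\<close> z by (simp add: zero_less_mult_iff)
  next
    case False
    then show ?thesis using im \<open>p < 0\<close> z by simp
  qed
qed

lemma is_eigenvalue_Re_neg_2x2:
  fixes J :: "real^2^2"
  assumes "trace J < 0" "det J > 0" "is_eigenvalue J l"
  shows "Re l < 0"
  using quadratic_root_Re_neg assms is_eigenvalue_2x2_iff by blast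

lemma is_eigenvalue_pos_if_det_neg_2x2:
  fixes J :: "real^2^2"
  assumes "det J < 0"
  shows "\<exists>l. is_eigenvalue J l \<and> Re l > 0"
proof -
  define p q where "p = trace J" and "q = det J"
  define x where "x = (p + sqrt (p^2 - 4 * q)) / 2"
  have "\<bar>p\<bar> < sqrt (p^2 - 4 * q)"
    using assms real_sqrt_less_mono[of "p^2" "p^2 - 4 * q"] by (simp add: q_def)
  then have "x > 0" by (simp add: x_def abs_less_iff)
  moreover have "0 \<le> p^2 - 4 * q"
    using assms zero_le_power2[of p] unfolding q_def by linarith
  then have "sqrt (p^2 - 4 * q)^2 = p^2 - 4 * q"
    by simp
  then have "x^2 - p * x + q = 0"
    by (simp add: x_def power2_eq_square field_simps)
  then have "is_eigenvalue J (of_real x)"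
    unfolding is_eigenvalue_2x2_iff p_def q_def
    by (metis of_real_0 of_real_add of_real_diff of_real_mult of_real_power)
  ultimately show ?thesis by force
qed

lemma lin_stable_if_trace_neg_det_pos:
  fixes J :: "real^2^2"
  assumes "(F mu has_derivative (\<lambda>h. J *v h)) (at x)" "trace J < 0" "det J > 0"
  shows "lin_stable F mu x"
  using assms is_eigenvalue_Re_neg_2x2 unfolding lin_stable_def by blast

lemma lin_unstable_if_det_neg:
  fixes J :: "real^2^2"
  assumes "(F mu has_derivative (\<lambda>h. J *v h)) (at x)" "det J < 0"
  shows "lin_unstable F mu x"
  using assms is_eigenvalue_pos_if_det_neg_2x2 unfolding lin_unstable_def by blast

lemma vector_2_eq_axis: "vector [x, y] = x *\<^sub>R axis 1 1 + y *\<^sub>R (axis 2 1 :: real^2)"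
  by (simp add: vec_eq_iff forall_2 axis_def)

lemma eventually_nhds_gt_if_isCont:
  fixes f :: "'a::t2_space \<Rightarrow> 'b::linorder_topology"
  assumes "isCont f x" "c < f x"
  shows "\<forall>\<^sub>F y in nhds x. c < f y"
  using assms by (simp add: isCont_def tendsto_at_iff_tendsto_nhds order_tendstoD)

lemma transcritical_bifurcationI:
  fixes \<beta> \<gamma> :: "real \<Rightarrow> real^'n"
  assumes "0 < \<delta>" "open U" "x0 \<in> U"
    and "\<beta> mu0 = x0" "\<gamma> mu0 = x0"
    and "continuous_on {mu0 - \<delta> <..< mu0 + \<delta>} \<beta>"
      "continuous_on {mu0 - \<delta> <..< mu0 + \<delta>} \<gamma>"
    and "(\<beta> has_vector_derivative d\<beta>) (at mu0)"
      "(\<gamma> has_vector_derivative d\<gamma>) (at mu0)" "d\<beta> \<noteq> d\<gamma>"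
    and "\<And>mu x. mu \<in> {mu0 - \<delta> <..< mu0 + \<delta>} \<Longrightarrow> x \<in> U \<Longrightarrow>
           F mu x = 0 \<longleftrightarrow> x = \<beta> mu \<or> x = \<gamma> mu"
    and "\<And>mu. mu \<in> {mu0 - \<delta> <..< mu0 + \<delta>} \<Longrightarrow> mu \<noteq> mu0 \<Longrightarrow>
           \<beta> mu \<noteq> \<gamma> mu \<and> \<beta> mu \<in> U \<and> \<gamma> mu \<in> U"
    and "\<And>mu. mu \<in> {mu0 - \<delta> <..< mu0} \<Longrightarrow>
           lin_stable F mu (\<beta> mu) \<and> lin_unstable F mu (\<gamma> mu)"
    and "\<And>mu. mu \<in> {mu0 <..< mu0 + \<delta>} \<Longrightarrow>
           lin_unstable F mu (\<beta> mu) \<and> lin_stable F mu (\<gamma> mu)"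
  shows "transcritical_bifurcation F x0 mu0"
  unfolding transcritical_bifurcation_def
  apply (rule exI[of _ \<delta>], rule conjI, rule assms)
  apply (rule exI[of _ U], intro conjI, rule assms, rule assms)
  apply (rule exI[of _ \<beta>], rule exI[of _ \<gamma>], rule exI[of _ d\<beta>], rule exI[of _ d\<gamma>])
  using assms by simp

lemma quadratic_root_rationalized:
  fixes a b c s :: real
  assumes "s^2 = 1" "0 \<le> b^2 + 4 * a * c" "b + s * sqrt (b^2 + 4 * a * c) \<noteq> 0"
  defines "u \<equiv> 2 * c / (b + s * sqrt (b^2 + 4 * a * c))"
  shows "a * u^2 + b * u = c"
proof -
  define R where "R = sqrt (b^2 + 4 * a * c)"
  have R2: "R^2 = b^2 + 4 * a * c" using assms(2) by (simp add: R_def)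
  have "u * (b + s * R) = 2 * c" using assms(3) by (simp add: u_def R_def)
  then have "s * R * u = 2 * c - b * u" by (simp add: algebra_simps)
  then have "(b^2 + 4 * a * c) * u^2 = (2 * c - b * u)^2"
    using assms(1) R2 by (metis mult.left_neutral power_mult_distrib)
  then have "4 * c * (c - b * u - a * u^2) = 0"
    by (simp add: algebra_simps power2_eq_square)
  then consider "c = 0" | "c - b * u - a * u^2 = 0" by auto
  then show ?thesis
    by cases (simp_all add: u_def)
qed

locale competition_model =
  fixes a2 b1 b2 c1 c2 k :: real
  assumes a2_pos: "0 < a2" and b1_pos: "0 < b1" and b2_pos: "0 < b2"
    and c1_pos: "0 < c1" and c2_pos: "0 < c2" and k_nonneg: "0 \<le> k"
begin

abbreviation F :: "real \<Rightarrow> real^2 \<Rightarrow> real^2" where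
  "F \<equiv> model_field b1 c1 a2 b2 c2 k"

definition a1_crit :: real where
  "a1_crit = c1 * a2 / b2"

definition D :: real where
  "D = b1 * b2 - c1 * c2"

definition H :: "real \<Rightarrow> real" where
  "H u = D * u + c1 * a2 / (1 + k * u)"

(* B0 = H'(0) *)
definition B0 :: real where
  "B0 = D - c1 * a2 * k"

definition H_slope :: "real \<Rightarrow> real \<Rightarrow> real" where
  "H_slope w1 w2 = D - c1 * a2 * k / ((1 + k * w1) * (1 + k * w2))"

definition jac :: "real \<Rightarrow> real \<Rightarrow> real \<Rightarrow> real^2^2" where
  "jac a1 u v = vector [
     vector [a1 - 2 * b1 * u - c1 * v, - c1 * u],
     vector [- a2 * k * v / (1 + k * u)^2 - c2 * v, a2 / (1 + k * u) - 2 * b2 * v - c2 * u]]"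

lemma B0_nonzero_iff: "B0 \<noteq> 0 \<longleftrightarrow> c1 \<noteq> b1 * b2 / (k * a2 + c2)"
proof -
  have "0 < k * a2 + c2" using k_nonneg a2_pos c2_pos by (simp add: add_nonneg_pos)
  then show ?thesis by (auto simp: B0_def D_def field_simps)
qed

lemma E3_eq: "E3 a2 b2 = vector [0, a2 / b2]"
  by (simp add: E3_def vec_eq_iff forall_2)

lemma field_eq_0_iff:
  "F a1 x = 0 \<longleftrightarrow> x$1 * (a1 - b1 * x$1 - c1 * x$2) = 0 \<and>
     x$2 * (a2 / (1 + k * x$1) - b2 * x$2 - c2 * x$1) = 0"
  by (simp add: model_field_def vec_eq_iff forall_2 algebra_simps power2_eq_square)

lemma field_has_derivative:
  assumes "1 + k * x$1 \<noteq> 0"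
  shows "(F a1 has_derivative (\<lambda>h. jac a1 (x$1) (x$2) *v h)) (at x)"
proof -
  have F_axis: "F a1 = (\<lambda>x.
      (a1 * x$1 - b1 * (x$1)^2 - c1 * x$1 * x$2) *\<^sub>R axis 1 1 +
      (a2 * x$2 / (1 + k * x$1) - b2 * (x$2)^2 - c2 * x$1 * x$2) *\<^sub>R axis 2 1)"
    by (auto simp: fun_eq_iff vec_eq_iff forall_2 model_field_def axis_def)
  have nth: "((\<lambda>x::real^2. x$i) has_derivative (\<lambda>h. h$i)) (at x)" for i
    by (rule bounded_linear_imp_has_derivative) (rule bounded_linear_vec_nth)
  show ?thesis
    unfolding F_axis
    apply (rule has_derivative_eq_rhs)
     apply (rule derivative_eq_intros nth refl)+
    using assms apply simp
    apply (rule derivative_eq_intros nth refl)+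
    using assms
    apply (simp add: fun_eq_iff vec_eq_iff forall_2 jac_def matrix_vector_mult_def sum_2 axis_def)
    apply (simp add: field_simps power2_eq_square)
    done
qed

lemma trace_det_jac_E3:
  "trace (jac a1 0 (a2 / b2)) = a1 - a1_crit - a2"
  "det (jac a1 0 (a2 / b2)) = (a1_crit - a1) * a2"
  using b2_pos by (simp_all add: jac_def a1_crit_def trace_def sum_2 det_2 algebra_simps)

lemma lin_stable_E3: "a1 < a1_crit \<Longrightarrow> lin_stable F a1 (E3 a2 b2)"
  using field_has_derivative[of "E3 a2 b2" a1] a2_pos
  by (intro lin_stable_if_trace_neg_det_pos) (auto simp: E3_eq trace_det_jac_E3 mult_neg_pos)

lemma lin_unstable_E3: "a1 > a1_crit \<Longrightarrow> lin_unstable F a1 (E3 a2 b2)"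
  using field_has_derivative[of "E3 a2 b2" a1] a2_pos
  by (intro lin_unstable_if_det_neg) (auto simp: E3_eq trace_det_jac_E3 mult_less_0_iff)

definition interior_equilibrium :: "real \<Rightarrow> real \<Rightarrow> real \<Rightarrow> bool" where
  "interior_equilibrium a1 u v \<longleftrightarrow>
     a1 = b1 * u + c1 * v \<and> a2 / (1 + k * u) = b2 * v + c2 * u"

lemma field_eq_0_if_interior_equilibrium:
  "interior_equilibrium a1 (x$1) (x$2) \<Longrightarrow> F a1 x = 0"
  by (simp add: field_eq_0_iff interior_equilibrium_def)

lemma interior_equilibrium_iff:
  "interior_equilibrium a1 u v \<longleftrightarrow> v = (a1 - b1 * u) / c1 \<and> b2 * a1 = H u"
proof -
  have "v = (a1 - b1 * u) / c1 \<longleftrightarrow> a1 = b1 * u + c1 * v"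
    using c1_pos by (auto simp: field_simps)
  moreover have "b2 * a1 - H u = c1 * (b2 * v + c2 * u - a2 / (1 + k * u))"
    if "a1 = b1 * u + c1 * v"
    using that by (simp add: H_def D_def algebra_simps)
  ultimately show ?thesis
    using c1_pos by (auto simp: interior_equilibrium_def)
qed

lemma H_eq_iff_quadratic:
  assumes "1 + k * u \<noteq> 0"
  shows "b2 * a1 = H u \<longleftrightarrow> k * D * u^2 + (D - b2 * k * a1) * u = b2 * (a1 - a1_crit)"
proof -
  have "H u * (1 + k * u) = D * u + k * D * u^2 + b2 * a1_crit"
    using assms b2_pos by (simp add: H_def a1_crit_def field_simps power2_eq_square)
  moreover have "b2 * a1 = H u \<longleftrightarrow> b2 * a1 * (1 + k * u) = H u * (1 + k * u)"
    using assms by simp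
  ultimately show ?thesis
    by (auto simp: algebra_simps)
qed

lemma H_diff:
  assumes "1 + k * w1 \<noteq> 0" "1 + k * w2 \<noteq> 0"
  shows "H w1 - H w2 = (w1 - w2) * H_slope w1 w2"
proof -
  define Y where "Y = c1 * a2 * k / ((1 + k * w1) * (1 + k * w2))"
  have "c1 * a2 / (1 + k * w1) - c1 * a2 / (1 + k * w2) = (w2 - w1) * Y"
    using assms by (simp add: Y_def field_simps)
  then show ?thesis
    unfolding H_def H_slope_def Y_def[symmetric] by (simp add: algebra_simps)
qed

lemma trace_det_jac_interior:
  assumes "interior_equilibrium a1 u v" "1 + k * u \<noteq> 0"
  shows "trace (jac a1 u v) = - (b1 * u + b2 * v)" "det (jac a1 u v) = u * v * H_slope u u"
proof -
  have J11: "jac a1 u v $ 1 $ 1 = - b1 * u" and J22: "jac a1 u v $ 2 $ 2 = - b2 * v"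
    using assms(1) by (simp_all add: jac_def interior_equilibrium_def)
  then show "trace (jac a1 u v) = - (b1 * u + b2 * v)"
    by (simp add: trace_def sum_2)
  show "det (jac a1 u v) = u * v * H_slope u u"
    using assms(2) unfolding det_2 J11 J22
    by (simp add: jac_def H_slope_def D_def field_simps power2_eq_square)
qed

lemma H_0: "H 0 = b2 * a1_crit"
  using b2_pos by (simp add: H_def a1_crit_def)

lemma mem_ball_E3:
  assumes "x \<in> ball (E3 a2 b2) r"
  shows "\<bar>x$1\<bar> < r" "\<bar>x$2 - a2 / b2\<bar> < r"
proof -
  have "\<bar>(E3 a2 b2 - x)$i\<bar> < r" for i
    using assms component_le_norm_cart[of "E3 a2 b2 - x" i] by (simp add: dist_norm)
  from this[of 1] this[of 2] show "\<bar>x$1\<bar> < r" "\<bar>x$2 - a2 / b2\<bar> < r"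
    by (simp_all add: E3_eq abs_minus_commute)
qed

end

locale competition_model_nondeg = competition_model +
  assumes nondegenerate: "c1 \<noteq> b1 * b2 / (k * a2 + c2)"
begin

lemma B0_nonzero: "B0 \<noteq> 0"
  using nondegenerate B0_nonzero_iff by blast

definition admissible_radius :: "real \<Rightarrow> bool" where
  "admissible_radius r \<longleftrightarrow> 0 < r \<and> 4 * b1 * r \<le> a2 \<and> 2 * b2 * r \<le> a2 \<and>
     (\<forall>w1 w2. \<bar>w1\<bar> < r \<longrightarrow> \<bar>w2\<bar> < r \<longrightarrow>
        0 < 1 + k * w1 \<and> 0 < H_slope w1 w2 * B0)"

lemma admissible_radius_exists: "\<exists>r. admissible_radius r"
proof -
  let ?P = "\<lambda>p :: real \<times> real. 0 < 1 + k * fst p \<and> 0 < H_slope (fst p) (snd p) * B0"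
  have "\<forall>\<^sub>F p in nhds (0::real, 0::real). 0 < 1 + k * fst p"
    by (rule eventually_nhds_gt_if_isCont) (intro continuous_intros, simp)
  moreover have "\<forall>\<^sub>F p in nhds (0, 0). 0 < H_slope (fst p) (snd p) * B0"
  proof (rule eventually_nhds_gt_if_isCont)
    show "isCont (\<lambda>p. H_slope (fst p) (snd p) * B0) (0, 0)"
      unfolding H_slope_def by (intro continuous_intros) simp
    show "0 < H_slope (fst (0, 0)) (snd (0, 0)) * B0"
      using B0_nonzero not_real_square_gt_zero[of B0]
      by (simp add: H_slope_def B0_def[symmetric] del: not_real_square_gt_zero)
  qed
  ultimately have "eventually ?P (nhds (0, 0))"
    by (rule eventually_conj)
  then obtain e where e: "0 < e" "\<And>p. dist p (0, 0) < e \<Longrightarrow> ?P p"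
    unfolding eventually_nhds_metric by blast
  define r where "r = min (e / 2) (min (a2 / (4 * b1)) (a2 / (2 * b2)))"
  have r_le: "r \<le> e / 2" "r \<le> a2 / (4 * b1)" "r \<le> a2 / (2 * b2)"
    by (simp_all add: r_def)
  have "?P (w1, w2)" if "\<bar>w1\<bar> < r" "\<bar>w2\<bar> < r" for w1 w2
  proof (rule e(2))
    have "dist (w1, w2) (0, 0) \<le> \<bar>w1\<bar> + \<bar>w2\<bar>"
      using sqrt_sum_squares_le_sum_abs by (simp add: dist_Pair_Pair)
    then show "dist (w1, w2) (0, 0) < e"
      using that r_le(1) by linarith
  qed
  moreover have "0 < r"
    using e(1) a2_pos b1_pos b2_pos by (simp add: r_def)
  moreover have "4 * b1 * r \<le> a2" "2 * b2 * r \<le> a2"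
    using r_le b1_pos b2_pos by (simp_all add: field_simps)
  ultimately have "admissible_radius r"
    by (simp add: admissible_radius_def)
  then show ?thesis ..
qed

definition disc :: "real \<Rightarrow> real" where
  "disc a1 = (D - b2 * k * a1)^2 + 4 * (k * D) * (b2 * (a1 - a1_crit))"

definition branch_denom :: "real \<Rightarrow> real" where
  "branch_denom a1 = (D - b2 * k * a1) + sgn B0 * sqrt (disc a1)"

(*
  The root of the quadratic in H_eq_iff_quadratic that vanishes at a1_crit, written as
  2 c / (b + sgn B0 * sqrt (b^2 + 4 a c)): unlike the usual formula this stays valid when the
  leading coefficient k * D is zero.
*)
definition branch_u :: "real \<Rightarrow> real" where
  "branch_u a1 = (a1 - a1_crit) * (2 * b2 / branch_denom a1)"

definition branch_v :: "real \<Rightarrow> real" where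
  "branch_v a1 = (a1 - b1 * branch_u a1) / c1"

definition branch :: "real \<Rightarrow> real^2" where
  "branch a1 = vector [branch_u a1, branch_v a1]"

lemma branch_components [simp]: "branch a1 $ 1 = branch_u a1" "branch a1 $ 2 = branch_v a1"
  by (simp_all add: branch_def)

lemma disc_crit: "disc a1_crit = B0^2"
  and branch_denom_crit: "branch_denom a1_crit = 2 * B0"
proof -
  have "D - b2 * k * a1_crit = B0"
    using b2_pos by (simp add: a1_crit_def B0_def)
  then show "disc a1_crit = B0^2" "branch_denom a1_crit = 2 * B0"
    by (simp_all add: disc_def branch_denom_def sgn_mult_abs)
qed

lemma branch_crit: "branch a1_crit = E3 a2 b2"
  using b2_pos c1_pos by (simp add: branch_def branch_v_def branch_u_def E3_eq a1_crit_def)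

lemma isCont_branch_denom: "isCont branch_denom a1"
  unfolding branch_denom_def disc_def by (intro continuous_intros)

lemma isCont_branch:
  assumes "branch_denom a1 \<noteq> 0"
  shows "isCont branch a1"
  unfolding branch_def vector_2_eq_axis branch_v_def branch_u_def
  using assms c1_pos by (intro continuous_intros isCont_branch_denom) auto

lemma branch_has_vector_derivative:
  "(branch has_vector_derivative vector [b2 / B0, (1 - b1 * (b2 / B0)) / c1]) (at a1_crit)"
proof -
  have "(branch_u has_field_derivative b2 / B0) (at a1_crit)"
    unfolding DERIV_caratheodory_within
  proof (intro exI conjI allI)
    show "isCont (\<lambda>a1. 2 * b2 / branch_denom a1) a1_crit"
      using B0_nonzero by (intro continuous_intros isCont_branch_denom) (simp add: branch_denom_crit)
  qed (simp_all add: branch_u_def branch_denom_crit mult.commute)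
  then show ?thesis
    unfolding branch_def [abs_def] vector_2_eq_axis branch_v_def
    using c1_pos by (auto intro!: derivative_eq_intros)
qed

lemma branch_quadratic:
  assumes "0 \<le> disc a1" "branch_denom a1 \<noteq> 0"
  shows "k * D * (branch_u a1)^2 + (D - b2 * k * a1) * branch_u a1 = b2 * (a1 - a1_crit)"
proof -
  have "branch_u a1 = 2 * (b2 * (a1 - a1_crit)) /
      ((D - b2 * k * a1) +
       sgn B0 * sqrt ((D - b2 * k * a1)^2 + 4 * (k * D) * (b2 * (a1 - a1_crit))))"
    by (simp add: branch_u_def branch_denom_def disc_def)
  then show ?thesis
    using quadratic_root_rationalized[of "sgn B0" "D - b2 * k * a1" "k * D" "b2 * (a1 - a1_crit)"]
      assms B0_nonzero
    by (simp add: disc_def branch_denom_def sgn_if mult.assoc)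
qed

lemma admissible_radius_bounds:
  assumes "admissible_radius r" "\<bar>u\<bar> < r" "\<bar>v - a2 / b2\<bar> < r"
  shows "0 < 1 + k * u" "0 < v" "0 < b1 * u + b2 * v"
proof -
  have "- r < u" "a2 / b2 - r < v"
    using assms(2,3) by (auto simp: abs_less_iff)
  then have "b1 * - r \<le> b1 * u" "b2 * (a2 / b2 - r) < b2 * v"
    using mult_left_mono[of "- r" u b1] mult_strict_left_mono[of "a2 / b2 - r" v b2] b1_pos b2_pos
    by simp_all
  then have "- a2 / 4 \<le> b1 * u" "a2 / 2 < b2 * v"
    using assms(1) b2_pos by (auto simp: admissible_radius_def right_diff_distrib)
  then show "0 < b1 * u + b2 * v"
    using a2_pos by linarith
  show "0 < v"
    using \<open>a2 / 2 < b2 * v\<close> a2_pos b2_pos zero_less_mult_pos[of b2 v] by linarith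
  show "0 < 1 + k * u"
    using assms(1,2) by (simp add: admissible_radius_def)
qed

lemma H_inj_on_radius:
  assumes "admissible_radius r" "\<bar>w1\<bar> < r" "\<bar>w2\<bar> < r" "H w1 = H w2"
  shows "w1 = w2"
proof -
  have "0 < 1 + k * w1" "0 < 1 + k * w2" "0 < H_slope w1 w2 * B0"
    using assms(1-3) by (auto simp: admissible_radius_def)
  then show ?thesis
    using H_diff[of w1 w2] assms(4) by auto
qed

lemma branch_interior_equilibrium:
  assumes r: "admissible_radius r" and branch: "0 \<le> disc a1" "branch_denom a1 \<noteq> 0"
    "branch a1 \<in> ball (E3 a2 b2) r"
  shows "interior_equilibrium a1 (branch_u a1) (branch_v a1)"
proof -
  have "\<bar>branch_u a1\<bar> < r"
    using mem_ball_E3(1)[OF branch(3)] by simp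
  then have "1 + k * branch_u a1 \<noteq> 0"
    using r unfolding admissible_radius_def by force
  then show ?thesis
    using branch_quadratic[OF branch(1,2)] H_eq_iff_quadratic
    by (simp add: interior_equilibrium_iff branch_v_def)
qed

lemma equilibria_near_E3:
  assumes r: "admissible_radius r" and x: "x \<in> ball (E3 a2 b2) r"
    and branch: "0 \<le> disc a1" "branch_denom a1 \<noteq> 0" "branch a1 \<in> ball (E3 a2 b2) r"
  shows "F a1 x = 0 \<longleftrightarrow> x = E3 a2 b2 \<or> x = branch a1"
proof
  assume "F a1 x = 0"
  moreover have "0 < x$2"
    using admissible_radius_bounds(2)[OF r mem_ball_E3[OF x]] .
  ultimately have eqs: "x$1 = 0 \<or> a1 - b1 * x$1 - c1 * x$2 = 0"
    "a2 / (1 + k * x$1) - b2 * x$2 - c2 * x$1 = 0"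
    by (simp_all add: field_eq_0_iff)
  show "x = E3 a2 b2 \<or> x = branch a1"
  proof (cases "x$1 = 0")
    case True
    then have "x$2 = a2 / b2"
      using eqs(2) b2_pos by (simp add: field_simps)
    then show ?thesis
      using True by (simp add: E3_eq vec_eq_iff forall_2)
  next
    case False
    then have "interior_equilibrium a1 (x$1) (x$2)"
      using eqs unfolding interior_equilibrium_def by linarith
    moreover have "interior_equilibrium a1 (branch_u a1) (branch_v a1)"
      using branch_interior_equilibrium[OF r branch] .
    moreover have "\<bar>branch_u a1\<bar> < r"
      using mem_ball_E3(1)[OF branch(3)] by simp
    ultimately have "x$1 = branch_u a1" "x$2 = branch_v a1"
      using H_inj_on_radius[OF r mem_ball_E3(1)[OF x]]
      by (simp_all add: interior_equilibrium_iff branch_v_def)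
    then show ?thesis
      by (simp add: branch_def vec_eq_iff forall_2)
  qed
next
  assume "x = E3 a2 b2 \<or> x = branch a1"
  moreover have "F a1 (E3 a2 b2) = 0"
    using b2_pos by (simp add: field_eq_0_iff E3_eq)
  moreover have "F a1 (branch a1) = 0"
    using branch_interior_equilibrium[OF r branch]
    by (intro field_eq_0_if_interior_equilibrium) simp
  ultimately show "F a1 x = 0"
    by blast
qed

lemma det_jac_interior_sign:
  assumes r: "admissible_radius r" "\<bar>u\<bar> < r" "\<bar>v - a2 / b2\<bar> < r"
    and eq: "interior_equilibrium a1 u v" and "u \<noteq> 0"
  shows "0 < det (jac a1 u v) * (a1 - a1_crit)"
proof -
  have pos: "0 < 1 + k * u" "0 < v" using admissible_radius_bounds[OF r] by auto
  have slopes: "0 < H_slope u u * B0" "0 < H_slope u 0 * B0"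
    using r by (auto simp: admissible_radius_def)
  have crit_dist: "b2 * (a1 - a1_crit) = u * H_slope u 0"
    using H_diff[of u 0] eq pos(1) by (simp add: interior_equilibrium_iff H_0 right_diff_distrib)
  have "det (jac a1 u v) * (a1 - a1_crit) * (b2 * B0^2) =
      v * u * H_slope u u * B0^2 * (b2 * (a1 - a1_crit))"
    using trace_det_jac_interior(2)[OF eq] pos(1) by (simp add: algebra_simps)
  also have "\<dots> = v * u^2 * ((H_slope u u * B0) * (H_slope u 0 * B0))"
    unfolding crit_dist by (simp add: power2_eq_square algebra_simps)
  finally have "0 < det (jac a1 u v) * (a1 - a1_crit) * (b2 * B0^2)"
    using pos slopes \<open>u \<noteq> 0\<close> by simp
  moreover have "0 < b2 * B0^2"
    using b2_pos B0_nonzero by simp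
  ultimately show ?thesis
    by (rule zero_less_mult_pos2)
qed

lemma lin_stability_interior:
  assumes r: "admissible_radius r" "\<bar>u\<bar> < r" "\<bar>v - a2 / b2\<bar> < r"
    and eq: "interior_equilibrium a1 u v" and "u \<noteq> 0"
  shows "a1 < a1_crit \<Longrightarrow> lin_unstable F a1 (vector [u, v])"
    and "a1_crit < a1 \<Longrightarrow> lin_stable F a1 (vector [u, v])"
proof -
  have "0 < 1 + k * u" "0 < b1 * u + b2 * v"
    using admissible_radius_bounds[OF r] by auto
  then have deriv: "(F a1 has_derivative (\<lambda>h. jac a1 u v *v h)) (at (vector [u, v]))"
    and trace: "trace (jac a1 u v) < 0"
    using field_has_derivative[of "vector [u, v]" a1] trace_det_jac_interior(1)[OF eq] by simp_all
  have sign: "0 < det (jac a1 u v) * (a1 - a1_crit)"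
    using det_jac_interior_sign[OF r eq \<open>u \<noteq> 0\<close>] .
  show "lin_unstable F a1 (vector [u, v])" if "a1 < a1_crit"
    using deriv sign that by (intro lin_unstable_if_det_neg) (auto simp: zero_less_mult_iff)
  show "lin_stable F a1 (vector [u, v])" if "a1_crit < a1"
    using deriv trace sign that
    by (intro lin_stable_if_trace_neg_det_pos) (auto simp: zero_less_mult_iff)
qed

lemma eventually_branch_near_E3:
  assumes "0 < r"
  shows "\<forall>\<^sub>F a1 in nhds a1_crit.
    0 < disc a1 \<and> branch_denom a1 \<noteq> 0 \<and> branch a1 \<in> ball (E3 a2 b2) r"
proof -
  have "\<forall>\<^sub>F a1 in nhds a1_crit. 0 < disc a1"
  proof (rule eventually_nhds_gt_if_isCont)
    show "isCont disc a1_crit"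
      unfolding disc_def by (intro continuous_intros)
    show "0 < disc a1_crit"
      using B0_nonzero by (simp add: disc_crit)
  qed
  moreover have "\<forall>\<^sub>F a1 in nhds a1_crit. 0 < \<bar>branch_denom a1\<bar>"
    using B0_nonzero
    by (intro eventually_nhds_gt_if_isCont continuous_intros isCont_branch_denom)
      (simp add: branch_denom_crit)
  moreover have "isCont branch a1_crit"
    using B0_nonzero by (intro isCont_branch) (simp add: branch_denom_crit)
  then have "(branch \<longlongrightarrow> branch a1_crit) (nhds a1_crit)"
    unfolding isCont_def tendsto_at_iff_tendsto_nhds .
  then have "\<forall>\<^sub>F a1 in nhds a1_crit. branch a1 \<in> ball (E3 a2 b2) r"
    using assms by (intro topological_tendstoD) (auto simp: branch_crit)
  ultimately show ?thesis
    by eventually_elim auto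
qed

lemma branch_u_nonzero:
  "a1 \<noteq> a1_crit \<Longrightarrow> branch_denom a1 \<noteq> 0 \<Longrightarrow> branch_u a1 \<noteq> 0"
  using b2_pos by (simp add: branch_u_def)

lemma branch_ne_E3:
  "a1 \<noteq> a1_crit \<Longrightarrow> branch_denom a1 \<noteq> 0 \<Longrightarrow> branch a1 \<noteq> E3 a2 b2"
  using branch_u_nonzero by (auto simp: E3_eq vec_eq_iff forall_2)

lemma branch_lin_stability:
  assumes r: "admissible_radius r"
    and branch: "0 \<le> disc a1" "branch_denom a1 \<noteq> 0" "branch a1 \<in> ball (E3 a2 b2) r"
  shows "a1 < a1_crit \<Longrightarrow> lin_unstable F a1 (branch a1)"
    and "a1_crit < a1 \<Longrightarrow> lin_stable F a1 (branch a1)"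
  using lin_stability_interior[OF r mem_ball_E3[OF branch(3), unfolded branch_components]
      branch_interior_equilibrium[OF r branch]]
    branch_u_nonzero[OF _ branch(2)]
  by (auto simp: branch_def)

theorem transcritical_bifurcation_E3: "transcritical_bifurcation F (E3 a2 b2) a1_crit"
proof -
  obtain r where r: "admissible_radius r"
    using admissible_radius_exists by blast
  then have E3_in_ball: "E3 a2 b2 \<in> ball (E3 a2 b2) r"
    by (simp add: admissible_radius_def)
  obtain \<delta> where "0 < \<delta>" and near: "\<And>a1. dist a1 a1_crit < \<delta> \<Longrightarrow>
      0 < disc a1 \<and> branch_denom a1 \<noteq> 0 \<and> branch a1 \<in> ball (E3 a2 b2) r"
    using eventually_branch_near_E3 E3_in_ball unfolding eventually_nhds_metric by force
  define I where "I = {a1_crit - \<delta> <..< a1_crit + \<delta>}"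
  have near_I: "0 \<le> disc a1" "branch_denom a1 \<noteq> 0" "branch a1 \<in> ball (E3 a2 b2) r"
    if "a1 \<in> I" for a1
    using near[of a1] that by (auto simp: I_def dist_real_def abs_less_iff)
  have branch_cont: "continuous_on I branch"
    using near_I(2) by (intro continuous_at_imp_continuous_on ballI isCont_branch)
  show ?thesis
  proof (rule transcritical_bifurcationI[where \<beta> = "\<lambda>_. E3 a2 b2" and \<gamma> = branch,
        OF \<open>0 < \<delta>\<close> open_ball E3_in_ball refl branch_crit continuous_on_const,
        folded I_def, OF branch_cont has_vector_derivative_const branch_has_vector_derivative])
    show "(0 :: real^2) \<noteq> vector [b2 / B0, (1 - b1 * (b2 / B0)) / c1]"
      using b2_pos B0_nonzero vector_2(1)[of "b2 / B0" "(1 - b1 * (b2 / B0)) / c1"]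
      by (metis divide_eq_0_iff less_irrefl zero_index)
    show "F a1 x = 0 \<longleftrightarrow> x = E3 a2 b2 \<or> x = branch a1"
      if "a1 \<in> I" "x \<in> ball (E3 a2 b2) r" for a1 x
      using equilibria_near_E3[OF r that(2) near_I[OF that(1)]] .
    show "E3 a2 b2 \<noteq> branch a1 \<and> E3 a2 b2 \<in> ball (E3 a2 b2) r \<and>
        branch a1 \<in> ball (E3 a2 b2) r"
      if "a1 \<in> I" "a1 \<noteq> a1_crit" for a1
      using branch_ne_E3[OF that(2) near_I(2)[OF that(1)]] E3_in_ball near_I(3)[OF that(1)] by auto
    show "lin_stable F a1 (E3 a2 b2) \<and> lin_unstable F a1 (branch a1)"
      if "a1 \<in> {a1_crit - \<delta> <..< a1_crit}" for a1
      using that lin_stable_E3 branch_lin_stability(1)[OF r near_I] by (simp add: I_def)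
    show "lin_unstable F a1 (E3 a2 b2) \<and> lin_stable F a1 (branch a1)"
      if "a1 \<in> {a1_crit <..< a1_crit + \<delta>}" for a1
      using that lin_unstable_E3 branch_lin_stability(2)[OF r near_I] by (simp add: I_def)
  qed
qed

end

theorem mainTheorem13:
  fixes a2 b1 b2 c1 c2 k :: real
  assumes "a2 > 0" "b1 > 0" "b2 > 0" "c1 > 0" "c2 > 0" "k \<ge> 0"
    and "c1 \<noteq> b1 * b2 / (k * a2 + c2)"
  shows "transcritical_bifurcation (model_field b1 c1 a2 b2 c2 k) (E3 a2 b2) (c1 * a2 / b2)"
proof -
  interpret competition_model_nondeg a2 b1 b2 c1 c2 k
    using assms by unfold_locales auto
  show ?thesis
    using transcritical_bifurcation_E3 by (simp add: a1_crit_def)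
qed

end
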